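(* Let $M$ be a finite monoid. The following are equivalent: (1) the relation $x\le_1 y \iff R(x)\subseteq R(xy)$ is total on $M$ (for all $x,y$, $x\le_1y$ or $y\le_1x$); (2) the relation $x\le_2 y\iff L(x)\subseteq L(yx)$ is total on $M$; (3) the relation $x\le_3 y\iff J(x)=J(xy)=J(yx)$ is total on $M$; (4) the two-sided ideals $J(x)$, $x\in M$, are totally ordered by inclusion, and $J(xy)=J(x)\cap J(y)$ for all $x,y\in M$. Whenever one of these holds, the relations $\le_1,\le_2,\le_3$ coincide. Furthermore, if $M$ is a submonoid of the monoid of endofunctions of a finite set $Q$ (with product $fg=f\circ g$), then these conditions are equivalent to: for all $f,g\in M$, $f\sqsubseteq g$ or $g\sqsubseteq f$, where $f\sqsubseteq g$ iff $\mathrm{Im}(f)\subseteq\mathrm{Im}(f\circ g)$.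
   Context: For $m$ in a monoid $M$: $J(m)=\{xmy: x,y\in M\}$ (two-sided ideal), $L(m)=\{xm:x\in M\}$ (left ideal), $R(m)=\{my:y\in M\}$ (right ideal). $\mathrm{Im}(f)$ denotes the image of a function $f$. *)

theory Defs
  imports "HOL-Algebra.Group" "HOL-Library.FuncSet"
begin

definition Jid :: "('a,'b) monoid_scheme \<Rightarrow> 'a \<Rightarrow> 'a set" where
  "Jid M m = {x \<otimes>\<^bsub>M\<^esub> m \<otimes>\<^bsub>M\<^esub> y | x y. x \<in> carrier M \<and> y \<in> carrier M}"

definition Lid :: "('a,'b) monoid_scheme \<Rightarrow> 'a \<Rightarrow> 'a set" where
  "Lid M m = {x \<otimes>\<^bsub>M\<^esub> m | x. x \<in> carrier M}"

definition Rid :: "('a,'b) monoid_scheme \<Rightarrow> 'a \<Rightarrow> 'a set" where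
  "Rid M m = {m \<otimes>\<^bsub>M\<^esub> y | y. y \<in> carrier M}"

definition le1 :: "('a,'b) monoid_scheme \<Rightarrow> 'a \<Rightarrow> 'a \<Rightarrow> bool" where
  "le1 M x y \<longleftrightarrow> Rid M x \<subseteq> Rid M (x \<otimes>\<^bsub>M\<^esub> y)"

definition le2 :: "('a,'b) monoid_scheme \<Rightarrow> 'a \<Rightarrow> 'a \<Rightarrow> bool" where
  "le2 M x y \<longleftrightarrow> Lid M x \<subseteq> Lid M (y \<otimes>\<^bsub>M\<^esub> x)"

definition le3 :: "('a,'b) monoid_scheme \<Rightarrow> 'a \<Rightarrow> 'a \<Rightarrow> bool" where
  "le3 M x y \<longleftrightarrow> Jid M x = Jid M (x \<otimes>\<^bsub>M\<^esub> y) \<and> Jid M x = Jid M (y \<otimes>\<^bsub>M\<^esub> x)"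

definition total_rel_on :: "'a set \<Rightarrow> ('a \<Rightarrow> 'a \<Rightarrow> bool) \<Rightarrow> bool" where
  "total_rel_on A r \<longleftrightarrow> (\<forall>x\<in>A. \<forall>y\<in>A. r x y \<or> r y x)"

definition cond4 :: "('a,'b) monoid_scheme \<Rightarrow> bool" where
  "cond4 M \<longleftrightarrow> (\<forall>x\<in>carrier M. \<forall>y\<in>carrier M. Jid M x \<subseteq> Jid M y \<or> Jid M y \<subseteq> Jid M x)
     \<and> (\<forall>x\<in>carrier M. \<forall>y\<in>carrier M. Jid M (x \<otimes>\<^bsub>M\<^esub> y) = Jid M x \<inter> Jid M y)"

text \<open>The monoid with carrier S, a set of endofunctions of Q (extensional functions on Q),
  product f g = f \<circ> g, unit the identity of Q.\<close>
definition fun_monoid :: "'q set \<Rightarrow> ('q \<Rightarrow> 'q) set \<Rightarrow> ('q \<Rightarrow> 'q) monoid" where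
  "fun_monoid Q S = \<lparr>carrier = S, mult = compose Q, one = restrict id Q\<rparr>"

definition img_le :: "'q set \<Rightarrow> ('q \<Rightarrow> 'q) \<Rightarrow> ('q \<Rightarrow> 'q) \<Rightarrow> bool" where
  "img_le Q f g \<longleftrightarrow> f ` Q \<subseteq> (compose Q f g) ` Q"

end

theory Submission
  imports Defs
begin

text \<open>
  Finite monoids are stable: if \<open>x \<in> J(xa)\<close>, write \<open>x = u x w\<close> with \<open>w = a v\<close>; then
  \<open>x = u\<^sup>n x w\<^sup>n\<close>, so an idempotent power \<open>w\<^sup>n\<close> fixes \<open>x\<close> from the right, and since
  \<open>w\<^sup>n\<close> begins with \<open>a\<close> we get \<open>x \<in> R(xa)\<close>. Hence \<open>x \<le>\<^sub>1 y\<close> iff \<open>x \<in> J(xy)\<close>.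
  If \<open>\<le>\<^sub>1\<close> is total, the same idempotent-power trick applied to \<open>z = yx\<close> turns
  \<open>y \<in> J(yx)\<close> into \<open>y \<in> J(xy)\<close>, so \<open>J(xy)\<close> is always \<open>J(x)\<close> or \<open>J(y)\<close>; this is (4), and
  under (4) all three relations reduce to \<open>J(x) \<subseteq> J(y)\<close>. The relation \<open>\<le>\<^sub>2\<close> is \<open>\<le>\<^sub>1\<close> of the
  opposite monoid, which gives the symmetric implications.

  For a monoid of transformations, \<open>f \<le>\<^sub>1 g\<close> always implies \<open>Im f \<subseteq> Im (fg)\<close>. Conversely, if
  moreover \<open>k = fg\<close> satisfies \<open>Im k \<subseteq> Im (kk)\<close>, then every power of \<open>k\<close> has image
  \<open>Im k = Im f\<close>, so an idempotent power \<open>e\<close> of \<open>k\<close> is the identity on \<open>Im f\<close> and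
  \<open>f = e f \<in> R(k)\<close>.
\<close>

context monoid begin

lemma pow_idempotent_exists:
  assumes fin: "finite (carrier G)" and z: "z \<in> carrier G"
  shows "\<exists>n>0. z [^] n \<otimes> z [^] n = z [^] (n::nat)"
proof -
  have "\<not> inj (\<lambda>k::nat. z [^] k)"
  proof
    assume "inj (\<lambda>k::nat. z [^] k)"
    moreover have "finite (range (\<lambda>k::nat. z [^] k))"
      using z by (auto intro: finite_subset[OF _ fin])
    ultimately show False using finite_imageD by fastforce
  qed
  then obtain a b :: nat where ab: "a < b" "z [^] a = z [^] b"
    unfolding inj_def by (metis linorder_neqE_nat)
  define p where "p = b - a"
  have p: "p > 0" using ab p_def by simp
  have shift: "z [^] (m + p) = z [^] m" if "a \<le> m" for m
  proof -
    have "z [^] (m + p) = z [^] b \<otimes> z [^] (m - a)"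
      using z that ab(1) by (simp add: nat_pow_mult p_def add.commute)
    also have "\<dots> = z [^] m"
      using z that by (simp add: ab(2)[symmetric] nat_pow_mult)
    finally show ?thesis .
  qed
  have periodic: "z [^] (m + k * p) = z [^] m" if "a \<le> m" for m k
  proof (induction k)
    case (Suc k)
    have "z [^] (m + Suc k * p) = z [^] ((m + k * p) + p)" by (simp add: algebra_simps)
    also have "\<dots> = z [^] m" using shift[of "m + k * p"] Suc that by simp
    finally show ?case .
  qed simp
  define n where "n = (a + 1) * p"
  have "0 < n" "a \<le> n" using p by (cases p; simp add: n_def)+
  have "z [^] n \<otimes> z [^] n = z [^] (n + (a + 1) * p)" using z by (simp add: nat_pow_mult n_def)
  also have "\<dots> = z [^] n" using periodic \<open>a \<le> n\<close> by blast
  finally show ?thesis using \<open>0 < n\<close> by blast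
qed

lemma Rid_self: "x \<in> carrier G \<Longrightarrow> x \<in> Rid G x"
  unfolding Rid_def by (rule CollectI, rule exI[of _ \<one>]) simp

lemma Jid_self: "x \<in> carrier G \<Longrightarrow> x \<in> Jid G x"
  unfolding Jid_def by (auto intro!: exI[of _ \<one>])

lemma Rid_subset_Rid:
  assumes "x \<in> Rid G z" "z \<in> carrier G"
  shows "Rid G x \<subseteq> Rid G z"
  using assms unfolding Rid_def by (auto simp: m_assoc)

lemma Jid_subset_Jid:
  assumes "x \<in> Jid G z" "z \<in> carrier G"
  shows "Jid G x \<subseteq> Jid G z"
proof
  fix w assume "w \<in> Jid G x"
  then obtain a b where ab: "a \<in> carrier G" "b \<in> carrier G" "w = a \<otimes> x \<otimes> b"
    unfolding Jid_def by auto
  obtain c d where cd: "c \<in> carrier G" "d \<in> carrier G" "x = c \<otimes> z \<otimes> d"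
    using assms(1) unfolding Jid_def by auto
  have "w = (a \<otimes> c) \<otimes> z \<otimes> (d \<otimes> b)" using ab cd assms(2) by (simp add: m_assoc)
  with ab cd show "w \<in> Jid G z" unfolding Jid_def by blast
qed

lemma Rid_subset_Jid: "x \<in> carrier G \<Longrightarrow> Rid G x \<subseteq> Jid G x"
  unfolding Rid_def Jid_def by (force intro: exI[of _ \<one>])

lemma Jid_mult_subset:
  assumes "x \<in> carrier G" "y \<in> carrier G"
  shows "Jid G (x \<otimes> y) \<subseteq> Jid G x \<inter> Jid G y"
proof -
  have "x \<otimes> y = \<one> \<otimes> x \<otimes> y" "x \<otimes> y = x \<otimes> y \<otimes> \<one>" using assms by simp_all
  then have "x \<otimes> y \<in> Jid G x" "x \<otimes> y \<in> Jid G y" using assms unfolding Jid_def by blast+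
  then show ?thesis using Jid_subset_Jid assms by blast
qed

lemma sandwich_pow:
  assumes carrier: "x \<in> carrier G" "u \<in> carrier G" "w \<in> carrier G"
    and x: "x = u \<otimes> x \<otimes> w"
  shows "x = u [^] k \<otimes> x \<otimes> w [^] (k::nat)"
proof (induction k)
  case (Suc k)
  have "u [^] Suc k \<otimes> x \<otimes> w [^] Suc k = u [^] k \<otimes> (u \<otimes> x \<otimes> w) \<otimes> w [^] k"
    using carrier nat_pow_Suc2[OF carrier(3), of k] by (simp add: m_assoc)
  then show ?case using Suc x by simp
qed (use carrier in simp)

lemma Jid_imp_Rid:
  assumes fin: "finite (carrier G)" and x: "x \<in> carrier G" and a: "a \<in> carrier G"
    and "x \<in> Jid G (x \<otimes> a)"
  shows "x \<in> Rid G (x \<otimes> a)"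
proof -
  obtain u v where uv: "u \<in> carrier G" "v \<in> carrier G" "x = u \<otimes> (x \<otimes> a) \<otimes> v"
    using assms(4) unfolding Jid_def by blast
  define w where "w = a \<otimes> v"
  have w: "w \<in> carrier G" using a uv w_def by simp
  have "x = u \<otimes> x \<otimes> w" using uv x a by (simp add: w_def m_assoc)
  note sandwich = sandwich_pow[OF x uv(1) w this]
  obtain n where n: "w [^] Suc n \<otimes> w [^] Suc n = w [^] Suc n"
    using pow_idempotent_exists[OF fin w] by (metis gr0_implies_Suc)
  have "x \<otimes> w [^] Suc n = u [^] Suc n \<otimes> x \<otimes> (w [^] Suc n \<otimes> w [^] Suc n)"
    using uv x w by (subst sandwich[of "Suc n"]) (simp add: m_assoc del: nat_pow_Suc)
  also have "\<dots> = x" using n sandwich[of "Suc n"] by simp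
  finally have "x = x \<otimes> w [^] Suc n" ..
  also have "w [^] Suc n = a \<otimes> (v \<otimes> w [^] n)"
    using a uv w nat_pow_Suc2[OF w] by (simp add: w_def m_assoc del: nat_pow_Suc)
  finally have "x = (x \<otimes> a) \<otimes> (v \<otimes> w [^] n)" using x a uv w by (simp add: m_assoc)
  then show ?thesis unfolding Rid_def using uv w by blast
qed

lemma le1_iff_Jid:
  assumes "finite (carrier G)" "x \<in> carrier G" "y \<in> carrier G"
  shows "le1 G x y \<longleftrightarrow> x \<in> Jid G (x \<otimes> y)"
  using assms Jid_imp_Rid[of x y] Rid_self[of x] Rid_subset_Jid[of "x \<otimes> y"]
    Rid_subset_Rid[of x "x \<otimes> y"]
  unfolding le1_def by blast

lemma Rid_pow_of_Rid_square:
  assumes z: "z \<in> carrier G" and "z \<in> Rid G (z \<otimes> z)"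
  shows "z \<in> Rid G (z [^] Suc k)"
proof (induction k)
  case 0
  then show ?case using Rid_self z by simp
next
  case (Suc k)
  obtain b where b: "b \<in> carrier G" "z = z \<otimes> z \<otimes> b"
    using assms(2) unfolding Rid_def by auto
  obtain c where c: "c \<in> carrier G" "z = z [^] Suc k \<otimes> c"
    using Suc unfolding Rid_def by auto
  have "z [^] Suc k \<otimes> c = z [^] k \<otimes> (z \<otimes> z \<otimes> b) \<otimes> c" using b(2)[symmetric] by simp
  also have "\<dots> = z [^] Suc (Suc k) \<otimes> (b \<otimes> c)" using z b(1) c(1) by (simp add: m_assoc)
  finally show ?case using b(1) c unfolding Rid_def by auto
qed

lemma pow_left_unit_of_Rid_square:
  assumes fin: "finite (carrier G)" and z: "z \<in> carrier G" and "z \<in> Rid G (z \<otimes> z)"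
  shows "\<exists>n. z [^] Suc n \<otimes> z = z"
proof -
  obtain n where n: "z [^] Suc n \<otimes> z [^] Suc n = z [^] Suc n"
    using pow_idempotent_exists[OF fin z] by (metis gr0_implies_Suc)
  obtain c where c: "c \<in> carrier G" "z = z [^] Suc n \<otimes> c"
    using Rid_pow_of_Rid_square[OF z assms(3)] unfolding Rid_def by blast
  have "z [^] Suc n \<otimes> z = (z [^] Suc n \<otimes> z [^] Suc n) \<otimes> c"
    using z c by (subst c(2)) (simp add: m_assoc del: nat_pow_Suc)
  also have "\<dots> = z" using n c(2) by simp
  finally show ?thesis ..
qed

lemma Jid_swap_of_total_le1:
  assumes fin: "finite (carrier G)" and total: "total_rel_on (carrier G) (le1 G)"
    and x: "x \<in> carrier G" and y: "y \<in> carrier G" and "y \<in> Jid G (y \<otimes> x)"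
  shows "y \<in> Jid G (x \<otimes> y)"
proof -
  define z where "z = y \<otimes> x"
  have z: "z \<in> carrier G" using x y z_def by simp
  obtain t where t: "t \<in> carrier G" "y = z \<otimes> t"
    using Jid_imp_Rid[OF fin y x assms(5)] unfolding Rid_def z_def by auto
  have "le1 G z z" using total z unfolding total_rel_on_def by blast
  then have "z \<in> Rid G (z \<otimes> z)" using Rid_self z unfolding le1_def by blast
  then obtain n where n: "z [^] Suc n \<otimes> z = z"
    using pow_left_unit_of_Rid_square[OF fin z] by blast
  have "y = z [^] Suc n \<otimes> y"
    using z t n by (subst (1 2) t(2)) (simp add: m_assoc[symmetric] del: nat_pow_Suc)
  also have "\<dots> = (z [^] n \<otimes> y) \<otimes> (x \<otimes> y) \<otimes> \<one>" using x y by (simp add: z_def m_assoc)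
  finally show ?thesis unfolding Jid_def using x y z by blast
qed

lemma cond4_of_total_le1:
  assumes fin: "finite (carrier G)" and total: "total_rel_on (carrier G) (le1 G)"
  shows "cond4 G"
proof -
  have absorb: "Jid G x \<subseteq> Jid G (x \<otimes> y) \<or> Jid G y \<subseteq> Jid G (x \<otimes> y)"
    if x: "x \<in> carrier G" and y: "y \<in> carrier G" for x y
  proof -
    have "x \<in> Jid G (x \<otimes> y) \<or> y \<in> Jid G (y \<otimes> x)"
      using total x y le1_iff_Jid[OF fin] unfolding total_rel_on_def by blast
    then have "x \<in> Jid G (x \<otimes> y) \<or> y \<in> Jid G (x \<otimes> y)"
      using Jid_swap_of_total_le1[OF fin total x y] by blast
    then show ?thesis using Jid_subset_Jid x y by blast
  qed
  show ?thesis unfolding cond4_def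
  proof (intro conjI ballI)
    fix x y assume "x \<in> carrier G" "y \<in> carrier G"
    note absorb[OF this] Jid_mult_subset[OF this]
    then show "Jid G x \<subseteq> Jid G y \<or> Jid G y \<subseteq> Jid G x" "Jid G (x \<otimes> y) = Jid G x \<inter> Jid G y"
      by blast+
  qed
qed

lemma le3_iff_Jid_subset:
  assumes "cond4 G" "x \<in> carrier G" "y \<in> carrier G"
  shows "le3 G x y \<longleftrightarrow> Jid G x \<subseteq> Jid G y"
proof -
  have "Jid G (x \<otimes> y) = Jid G x \<inter> Jid G y" "Jid G (y \<otimes> x) = Jid G y \<inter> Jid G x"
    using assms unfolding cond4_def by auto
  then show ?thesis unfolding le3_def by blast
qed

lemma le1_iff_Jid_subset:
  assumes fin: "finite (carrier G)" and "cond4 G" and x: "x \<in> carrier G" and y: "y \<in> carrier G"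
  shows "le1 G x y \<longleftrightarrow> Jid G x \<subseteq> Jid G y"
proof -
  have "Jid G (x \<otimes> y) = Jid G x \<inter> Jid G y" using assms unfolding cond4_def by auto
  then show ?thesis
    using le1_iff_Jid[OF fin x y] Jid_subset_Jid[of x "x \<otimes> y"] Jid_self[OF x] x y by blast
qed

lemma total_le3_of_cond4:
  assumes "cond4 G" shows "total_rel_on (carrier G) (le3 G)"
  unfolding total_rel_on_def
proof (intro ballI)
  fix x y assume "x \<in> carrier G" "y \<in> carrier G"
  then show "le3 G x y \<or> le3 G y x"
    using assms le3_iff_Jid_subset[OF assms] unfolding cond4_def by auto
qed

lemma le1_of_le3:
  assumes "finite (carrier G)" "x \<in> carrier G" "y \<in> carrier G" "le3 G x y"
  shows "le1 G x y"
  using assms le1_iff_Jid Jid_self[of x] unfolding le3_def by blast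

end

definition opposite_monoid :: "('a, 'b) monoid_scheme \<Rightarrow> 'a monoid" where
  "opposite_monoid M = \<lparr>carrier = carrier M, mult = (\<lambda>x y. y \<otimes>\<^bsub>M\<^esub> x), one = \<one>\<^bsub>M\<^esub>\<rparr>"

lemma carrier_opposite_monoid [simp]: "carrier (opposite_monoid M) = carrier M"
  by (simp add: opposite_monoid_def)

lemma mult_opposite_monoid [simp]: "x \<otimes>\<^bsub>opposite_monoid M\<^esub> y = y \<otimes>\<^bsub>M\<^esub> x"
  by (simp add: opposite_monoid_def)

lemma monoid_opposite_monoid: "monoid M \<Longrightarrow> monoid (opposite_monoid M)"
  by (rule monoidI) (auto simp: monoid.m_assoc monoid.m_closed opposite_monoid_def)

lemma Jid_opposite_monoid:
  assumes "monoid M" "x \<in> carrier M"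
  shows "Jid (opposite_monoid M) x = Jid M x"
  unfolding Jid_def using assms by (auto 0 4 simp: monoid.m_assoc) (metis monoid.m_assoc)

lemma le1_opposite_monoid: "le1 (opposite_monoid M) = le2 M"
  unfolding le1_def le2_def Rid_def Lid_def by simp

lemma le3_opposite_monoid:
  assumes "monoid M" "x \<in> carrier M" "y \<in> carrier M"
  shows "le3 (opposite_monoid M) x y = le3 M x y"
  using assms unfolding le3_def by (simp add: Jid_opposite_monoid monoid.m_closed) blast

lemma cond4_opposite_monoid: "monoid M \<Longrightarrow> cond4 (opposite_monoid M) = cond4 M"
  unfolding cond4_def by (simp add: Jid_opposite_monoid monoid.m_closed Int_commute) blast

lemma finite_monoid_total_le_iff:
  assumes M: "monoid M" and fin: "finite (carrier M)"
  shows "(total_rel_on (carrier M) (le1 M) \<longleftrightarrow> total_rel_on (carrier M) (le2 M))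
          \<and> (total_rel_on (carrier M) (le2 M) \<longleftrightarrow> total_rel_on (carrier M) (le3 M))
          \<and> (total_rel_on (carrier M) (le3 M) \<longleftrightarrow> cond4 M)
          \<and> (total_rel_on (carrier M) (le1 M) \<longrightarrow>
               (\<forall>x\<in>carrier M. \<forall>y\<in>carrier M.
                  (le1 M x y \<longleftrightarrow> le2 M x y) \<and> (le1 M x y \<longleftrightarrow> le3 M x y)))"
proof -
  let ?Mop = "opposite_monoid M"
  have Mop: "monoid ?Mop" "finite (carrier ?Mop)" using M fin monoid_opposite_monoid by simp_all
  note le2_eq = le1_opposite_monoid[of M, symmetric]
  have T1_C4: "total_rel_on (carrier M) (le1 M) \<Longrightarrow> cond4 M"
    using monoid.cond4_of_total_le1[OF M fin] .
  have T2_C4: "total_rel_on (carrier M) (le2 M) \<Longrightarrow> cond4 M"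
    using monoid.cond4_of_total_le1[OF Mop] cond4_opposite_monoid[OF M] le2_eq by simp
  have C4_T3: "cond4 M \<Longrightarrow> total_rel_on (carrier M) (le3 M)"
    using monoid.total_le3_of_cond4[OF M] .
  have T3_T1: "total_rel_on (carrier M) (le3 M) \<Longrightarrow> total_rel_on (carrier M) (le1 M)"
    using monoid.le1_of_le3[OF M fin] unfolding total_rel_on_def by blast
  have T3_T2: "total_rel_on (carrier M) (le3 M) \<Longrightarrow> total_rel_on (carrier M) (le2 M)"
    using monoid.le1_of_le3[OF Mop] le3_opposite_monoid[OF M] le2_eq
    unfolding total_rel_on_def by (metis carrier_opposite_monoid)
  have coincide: "(le1 M x y \<longleftrightarrow> le2 M x y) \<and> (le1 M x y \<longleftrightarrow> le3 M x y)"
    if "cond4 M" "x \<in> carrier M" "y \<in> carrier M" for x y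
    using monoid.le1_iff_Jid_subset[OF M fin that] monoid.le3_iff_Jid_subset[OF M that]
      monoid.le1_iff_Jid_subset[OF Mop, of x y] cond4_opposite_monoid[OF M]
      Jid_opposite_monoid[OF M] le2_eq that
    by simp
  show ?thesis using T1_C4 T2_C4 C4_T3 T3_T1 T3_T2 coincide by blast
qed

lemma carrier_fun_monoid [simp]: "carrier (fun_monoid Q S) = S"
  by (simp add: fun_monoid_def)

lemma mult_fun_monoid [simp]: "f \<otimes>\<^bsub>fun_monoid Q S\<^esub> g = compose Q f g"
  by (simp add: fun_monoid_def)

locale transformation_monoid =
  fixes Q :: "'q set" and S :: "('q \<Rightarrow> 'q) set"
  assumes funcset: "S \<subseteq> Q \<rightarrow>\<^sub>E Q"
    and id_mem: "restrict id Q \<in> S"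
    and compose_closed: "f \<in> S \<Longrightarrow> g \<in> S \<Longrightarrow> compose Q f g \<in> S"
begin

lemma mem_funcset: "f \<in> S \<Longrightarrow> f \<in> Q \<rightarrow> Q"
  using funcset by auto

lemma mem_extensional: "f \<in> S \<Longrightarrow> f \<in> extensional Q"
  using funcset by (auto simp: PiE_def)

lemma monoid_fun_monoid: "monoid (fun_monoid Q S)"
proof (rule monoidI)
  have restrict_id: "restrict id Q = (\<lambda>x\<in>Q. x)" by (simp add: id_def)
  fix f g h assume f: "f \<in> carrier (fun_monoid Q S)" and g: "g \<in> carrier (fun_monoid Q S)"
    and h: "h \<in> carrier (fun_monoid Q S)"
  show "f \<otimes>\<^bsub>fun_monoid Q S\<^esub> g \<in> carrier (fun_monoid Q S)"
    using f g compose_closed by simp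
  show "f \<otimes>\<^bsub>fun_monoid Q S\<^esub> g \<otimes>\<^bsub>fun_monoid Q S\<^esub> h =
        f \<otimes>\<^bsub>fun_monoid Q S\<^esub> (g \<otimes>\<^bsub>fun_monoid Q S\<^esub> h)"
    using h by (simp add: compose_assoc[OF mem_funcset])
  show "\<one>\<^bsub>fun_monoid Q S\<^esub> \<otimes>\<^bsub>fun_monoid Q S\<^esub> f = f"
    using Id_compose[OF mem_funcset mem_extensional] f by (simp add: fun_monoid_def restrict_id)
  show "f \<otimes>\<^bsub>fun_monoid Q S\<^esub> \<one>\<^bsub>fun_monoid Q S\<^esub> = f"
    using compose_Id[OF mem_funcset mem_extensional] f by (simp add: fun_monoid_def restrict_id)
qed (use id_mem in \<open>simp add: fun_monoid_def\<close>)

interpretation M: monoid "fun_monoid Q S"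
  by (rule monoid_fun_monoid)

lemma finite_carrier_fun_monoid: "finite Q \<Longrightarrow> finite (carrier (fun_monoid Q S))"
  using funcset by (auto intro: finite_subset finite_PiE)

lemma image_compose: "g \<in> S \<Longrightarrow> compose Q f g ` Q = f ` g ` Q"
  by (force simp: compose_eq)

lemma img_le_of_le1:
  assumes f: "f \<in> S" and g: "g \<in> S" and "le1 (fun_monoid Q S) f g"
  shows "img_le Q f g"
proof -
  have "f \<in> Rid (fun_monoid Q S) (compose Q f g)"
    using assms M.Rid_self[of f] unfolding le1_def by auto
  then obtain h where h: "h \<in> S" "f = compose Q (compose Q f g) h"
    unfolding Rid_def by auto
  have "f ` Q = compose Q f g ` h ` Q" using h image_compose by metis
  also have "\<dots> \<subseteq> compose Q f g ` Q" using mem_funcset[OF h(1)] by auto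
  finally show ?thesis unfolding img_le_def .
qed

lemma image_pow:
  assumes k: "k \<in> S" and "img_le Q k k"
  shows "(k [^]\<^bsub>fun_monoid Q S\<^esub> Suc m) ` Q = k ` Q"
proof (induction m)
  case 0
  show ?case using k by (simp del: mult_fun_monoid)
next
  case (Suc m)
  have pow: "k [^]\<^bsub>fun_monoid Q S\<^esub> Suc m \<in> S"
    using M.nat_pow_closed[of k "Suc m"] k by (simp only: carrier_fun_monoid)
  have "(k [^]\<^bsub>fun_monoid Q S\<^esub> Suc (Suc m)) ` Q = k ` (k [^]\<^bsub>fun_monoid Q S\<^esub> Suc m) ` Q"
    using M.nat_pow_Suc2[of k "Suc m"] k image_compose[OF pow]
    by (simp only: carrier_fun_monoid mult_fun_monoid)
  also have "\<dots> = k ` k ` Q" using Suc by simp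
  also have "\<dots> = k ` Q"
    using assms image_compose[OF k, of k] mem_funcset[OF k] unfolding img_le_def by auto
  finally show ?case .
qed

lemma compose_idempotent_image:
  assumes e: "e \<in> S" and "compose Q e e = e" and f: "f \<in> S" and "f ` Q \<subseteq> e ` Q"
  shows "compose Q e f = f"
proof (rule extensionalityI[OF compose_extensional mem_extensional[OF f]])
  fix q assume q: "q \<in> Q"
  obtain p where "p \<in> Q" "f q = e p" using assms(4) q by blast
  then show "compose Q e f q = f q"
    using q assms(2) compose_eq[of p Q e e] by (simp add: compose_eq)
qed

lemma le1_of_img_le:
  assumes fin: "finite Q" and f: "f \<in> S" and g: "g \<in> S"
    and le: "img_le Q f g" and idem: "img_le Q (compose Q f g) (compose Q f g)"
  shows "le1 (fun_monoid Q S) f g"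
proof -
  let ?M = "fun_monoid Q S"
  define k where "k = compose Q f g"
  have k: "k \<in> S" using f g compose_closed k_def by simp
  have "k ` Q = f ` Q"
    using le image_compose[OF g, of f] mem_funcset[OF g] unfolding img_le_def k_def by auto
  obtain n where n: "k [^]\<^bsub>?M\<^esub> Suc n \<otimes>\<^bsub>?M\<^esub> k [^]\<^bsub>?M\<^esub> Suc n = k [^]\<^bsub>?M\<^esub> Suc n"
    using M.pow_idempotent_exists[OF finite_carrier_fun_monoid[OF fin]] k
    by (metis carrier_fun_monoid gr0_implies_Suc)
  define e where "e = k [^]\<^bsub>?M\<^esub> Suc n"
  have e: "e \<in> S"
    using M.nat_pow_closed[of k "Suc n"] k unfolding e_def by (simp only: carrier_fun_monoid)
  have "e ` Q = f ` Q"
    using image_pow[OF k] idem \<open>k ` Q = f ` Q\<close> by (simp add: e_def k_def del: M.nat_pow_Suc)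
  then have "compose Q e f = f" using compose_idempotent_image[OF e _ f] n by (simp add: e_def)
  moreover have "e = k \<otimes>\<^bsub>?M\<^esub> k [^]\<^bsub>?M\<^esub> n" using M.nat_pow_Suc2 k by (simp add: e_def)
  ultimately have "f = k \<otimes>\<^bsub>?M\<^esub> (k [^]\<^bsub>?M\<^esub> n \<otimes>\<^bsub>?M\<^esub> f)"
    using M.m_assoc[of k "k [^]\<^bsub>?M\<^esub> n" f] M.nat_pow_closed[of k n] k f by simp
  then have "f \<in> Rid ?M k" unfolding Rid_def using M.nat_pow_closed k f by fastforce
  then show ?thesis using M.Rid_subset_Rid k unfolding le1_def k_def by simp
qed

lemma total_le1_iff_total_img_le:
  assumes "finite Q"
  shows "total_rel_on S (le1 (fun_monoid Q S)) \<longleftrightarrow> total_rel_on S (img_le Q)"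
  using img_le_of_le1 le1_of_img_le[OF assms] compose_closed unfolding total_rel_on_def by meson

end


theorem lemma4p1:
  shows "(\<forall>M :: ('a,'b) monoid_scheme. monoid M \<and> finite (carrier M) \<longrightarrow>
            (total_rel_on (carrier M) (le1 M) \<longleftrightarrow> total_rel_on (carrier M) (le2 M))
          \<and> (total_rel_on (carrier M) (le2 M) \<longleftrightarrow> total_rel_on (carrier M) (le3 M))
          \<and> (total_rel_on (carrier M) (le3 M) \<longleftrightarrow> cond4 M)
          \<and> (total_rel_on (carrier M) (le1 M) \<longrightarrow>
               (\<forall>x\<in>carrier M. \<forall>y\<in>carrier M.
                  (le1 M x y \<longleftrightarrow> le2 M x y) \<and> (le1 M x y \<longleftrightarrow> le3 M x y))))
      \<and> (\<forall>(Q :: 'q set) S. finite Q \<and> S \<subseteq> Q \<rightarrow>\<^sub>E Q \<and> restrict id Q \<in> S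
            \<and> (\<forall>f\<in>S. \<forall>g\<in>S. compose Q f g \<in> S) \<longrightarrow>
            (total_rel_on S (le1 (fun_monoid Q S)) \<longleftrightarrow> total_rel_on S (img_le Q)))"
proof ((rule conjI; intro allI impI; elim conjE), goal_cases)
  case (1 M)
  then show ?case by (rule finite_monoid_total_le_iff)
next
  case (2 Q S)
  then show ?case
    by (intro transformation_monoid.total_le1_iff_total_img_le transformation_monoid.intro) auto
qed

end
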